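(* In the standing construction, let $\lambda_2=2/n$. Every weakly reduced diagram over $\langle\mathfrak A\mid\mathcal R\rangle$, equipped with its special selection, satisfies the condition $\mathcal B(\lambda_1,\lambda_2)$.
   Context: Standing construction: Fix an integer $n\ge 63$ and a real number $\lambda_1$ with $0<\lambda_1<1$ and $\bigl(4+\frac{2n\lambda_1}{1-\lambda_1}\bigr)\lambda_1\le\frac1n$. Let $\mathfrak A=\{x_1,\dots,x_n\}$. A group word over $\mathfrak A$ (a word in the letters $x_i^{\pm1}$) is called regular if it has the form $x_1^{k_1}x_2^{k_2}\cdots x_n^{k_n}$ with $k_i\in\mathbb Z$; $|w|$ denotes word length. Fix a total order on the set of reduced group words over $\mathfrak A$ which is order-isomorphic to $\mathbb N$. Define sets $\mathcal R_0\subseteq\mathcal R_1\subseteq\cdots$ inductively: $\mathcal R_0=\emptyset$; for $i>0$, if every group word over $\mathfrak A$ is equal to some regular word in the group $\langle\mathfrak A\mid\mathcal R_{i-1}\rangle$, put $\mathcal R_i=\mathcal R_{i-1}$ (and $w_i,m_i,r_i$ are undefined); otherwise let $w_i$ be the least (in the fixed order) reduced group word that does not start with $x_1^{\pm1}$, does not end with $x_n^{\pm1}$, and is not equal in $\langle\mathfrak A\mid\mathcal R_{i-1}\rangle$ to any regular word; choose a positive integer $m_i$ such that (a) $m_i\ne m_j$ for every $j<i$ for which $m_j$ is defined, (b) $nm_i+|w_i|\ge nm_j+|w_j|$ for every such $j<i$, (c) $\lambda_1(nm_i+|w_i|)\ge|w_i|$; set $r_i=x_1^{m_i}x_2^{m_i}\cdots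 x_n^{m_i}w_i^{-1}$ and $\mathcal R_i=\mathcal R_{i-1}\cup\{r_i\}$. Let $\mathcal R=\bigcup_{i\ge0}\mathcal R_i$, let $G=\langle\mathfrak A\mid\mathcal R\rangle$, and let $a_i\in G$ be the image of $x_i$. The statement is asserted for every choice of the order and of the $m_i$ satisfying (a)–(c). Diagrams: a map is a connected subcomplex of an oriented combinatorial 2-sphere together with a set of cycles (its contours) such that each oriented edge lies in the boundary cycle of a face or in a contour; a diagram over $\langle\mathfrak A\mid\mathcal R\rangle$ is a map whose oriented edges are labelled by letters of $\mathfrak A^{\pm1}$ (mutually inverse oriented edges get inverse labels) so that the contour $\partial\Pi$ of each face $\Pi$ (oriented counterclockwise) has a representative cyclic path labelled by an element of $\mathcal R^{\pm1}$; $|\partial\Pi|$ is its length. A pair of distinct faces $\{\Pi_1,\Pi_2\}$ is immediately cancellable if there are paths $p_1,p_2$ with a nontrivial common initial subpath, $\langle p_1\rangle=\partial\Pi_1$, $\langle p_2^{-1}\rangle=\partial\Pi_2$ and equal labels; a diagram is weakly reduced if it has no such pair. A selection on a diagram is a set of nontrivial reduced subpaths of contours of faces closed under taking nontrivial subpaths; paths in it are selected; a path $p$ is double-selected if $p$ and $p^{-1}$ are both selected. The special selection: for each face $\Pi$, write $\partial\Pi=\langle st\rangle$ where $\ell(s)=x_1^{m}x_2^{m}\cdots x_n^{m}$ or $x_n^{-m}\cdots x_1^{-m}$ for some $m\in\mathbb N$ and $|s|>\frac{n}{2n-2}|\partial\Pi|$ (this $s$ is the part of $r_j^{\pm1}$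 corresponding to $x_1^{m_j}\cdots x_n^{m_j}$); the selected subpaths of $\partial\Pi$ are exactly the nontrivial subpaths of $s$. An oriented arc is a simple path all of whose intermediate vertices have degree $2$; an arc is a pair of mutually inverse oriented arcs; an arc is double-selected if both its oriented arcs are selected, and is incident to $\Pi$ if one of its oriented arcs is a subpath of $\partial\Pi$. For $\lambda_1,\lambda_2\in[0,1]$, a diagram with selection satisfies $\mathcal B(\lambda_1,\lambda_2)$ if for each face $\Pi$: ($\mathcal B_0$) $\partial\Pi$ has at least one selected subpath and at most one maximal selected subpath; ($\mathcal B_1$) some selected subpath of $\partial\Pi$ has length $\ge(1-\lambda_1)|\partial\Pi|$; ($\mathcal B_2$) every double-selected arc incident to $\Pi$ has length $\le\lambda_2|\partial\Pi|$. *)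

theory Defs
  imports Main "HOL.Real"
begin

section \<open>Group words over the alphabet x_1, ..., x_n\<close>

text \<open>A letter (i, True) stands for x_i, a letter (i, False) for x_i^{-1}.\<close>
type_synonym letter = "nat \<times> bool"

definition inv_letter :: "letter \<Rightarrow> letter" where
  "inv_letter a = (fst a, \<not> snd a)"

definition inv_word :: "letter list \<Rightarrow> letter list" where
  "inv_word w = rev (map inv_letter w)"

definition is_word :: "nat \<Rightarrow> letter list \<Rightarrow> bool" where
  "is_word n w \<longleftrightarrow> (\<forall>a\<in>set w. 1 \<le> fst a \<and> fst a \<le> n)"

definition reduced_word :: "letter list \<Rightarrow> bool" where
  "reduced_word w \<longleftrightarrow> (\<forall>i. Suc i < length w \<longrightarrow> w ! Suc i \<noteq> inv_letter (w ! i))"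

definition gen_pow :: "nat \<Rightarrow> int \<Rightarrow> letter list" where
  "gen_pow i k = (if 0 \<le> k then replicate (nat k) (i, True) else replicate (nat (- k)) (i, False))"

definition regular_word :: "nat \<Rightarrow> letter list \<Rightarrow> bool" where
  "regular_word n w \<longleftrightarrow> (\<exists>k :: nat \<Rightarrow> int. w = concat (map (\<lambda>i. gen_pow i (k i)) [1..<Suc n]))"

definition block_word :: "nat \<Rightarrow> nat \<Rightarrow> letter list" where
  "block_word n m = concat (map (\<lambda>i. replicate m (i, True)) [1..<Suc n])"

definition relator :: "nat \<Rightarrow> nat \<Rightarrow> letter list \<Rightarrow> letter list" where
  "relator n m w = block_word n m @ inv_word w"

text \<open>Equality of words in the group presented by the relators R: the equivalence
  closure of deleting a cancelling pair a a^{-1} or an occurrence of a relator.\<close>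
definition elem_step :: "letter list set \<Rightarrow> letter list \<Rightarrow> letter list \<Rightarrow> bool" where
  "elem_step R u v \<longleftrightarrow>
     (\<exists>x y a. u = x @ [a, inv_letter a] @ y \<and> v = x @ y) \<or>
     (\<exists>x y r. r \<in> R \<and> u = x @ r @ y \<and> v = x @ y)"

definition grp_eq :: "letter list set \<Rightarrow> letter list \<Rightarrow> letter list \<Rightarrow> bool" where
  "grp_eq R u v \<longleftrightarrow> (\<lambda>x y. elem_step R x y \<or> elem_step R y x)\<^sup>*\<^sup>* u v"

definition all_regular :: "nat \<Rightarrow> letter list set \<Rightarrow> bool" where
  "all_regular n R \<longleftrightarrow> (\<forall>u. is_word n u \<longrightarrow> (\<exists>v. regular_word n v \<and> grp_eq R u v))"

definition candidate :: "nat \<Rightarrow> letter list set \<Rightarrow> letter list \<Rightarrow> bool" where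
  "candidate n R w \<longleftrightarrow> is_word n w \<and> reduced_word w \<and>
     (w \<noteq> [] \<longrightarrow> fst (hd w) \<noteq> 1 \<and> fst (last w) \<noteq> n) \<and>
     \<not> (\<exists>v. regular_word n v \<and> grp_eq R w v)"

text \<open>The fixed order on reduced words, order-isomorphic to
  the naturals, is given by its enumeration enum (enum k is the k-th word).
  Rs i = R_i; dfd i says whether w_i, m_i, r_i are defined; ws i = w_i; ms i = m_i.\<close>
definition standing_construction ::
  "nat \<Rightarrow> real \<Rightarrow> (nat \<Rightarrow> letter list) \<Rightarrow> (nat \<Rightarrow> letter list set) \<Rightarrow> (nat \<Rightarrow> bool)
     \<Rightarrow> (nat \<Rightarrow> letter list) \<Rightarrow> (nat \<Rightarrow> nat) \<Rightarrow> bool" where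
  "standing_construction n l1 enum Rs dfd ws ms \<longleftrightarrow>
     bij_betw enum UNIV {w. is_word n w \<and> reduced_word w} \<and>
     Rs 0 = {} \<and> \<not> dfd 0 \<and>
     (\<forall>i>0.
        (all_regular n (Rs (i - 1)) \<longrightarrow> \<not> dfd i \<and> Rs i = Rs (i - 1)) \<and>
        (\<not> all_regular n (Rs (i - 1)) \<longrightarrow>
           dfd i \<and>
           candidate n (Rs (i - 1)) (ws i) \<and>
           (\<exists>k. enum k = ws i \<and> (\<forall>k'<k. \<not> candidate n (Rs (i - 1)) (enum k'))) \<and>
           0 < ms i \<and>
           (\<forall>j<i. dfd j \<longrightarrow> ms i \<noteq> ms j \<and>
                 n * ms j + length (ws j) \<le> n * ms i + length (ws i)) \<and>
           real (length (ws i)) \<le> l1 * real (n * ms i + length (ws i)) \<and>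
           Rs i = insert (relator n (ms i) (ws i)) (Rs (i - 1))))"

section \<open>Maps and diagrams (combinatorial maps on the sphere)\<close>

text \<open>A map is given by a finite set D of oriented edges (darts), the edge reversal rv
  (fixed-point-free involution, e to e^{-1}), and the permutation nx sending an oriented
  edge to the next one along the boundary cycle of the region (face or hole) it bounds.
  Vertices are the orbits of the rotation e to nx (rv e); the tail of e is its orbit.
  Genus 0 is expressed by Euler's formula V - E + F = 2 (F counting all regions), plus
  connectedness.  FD is the set of darts lying on boundaries of faces; the remaining
  regions are the holes, whose boundary cycles are the contours of the map.\<close>

definition orbit :: "('d \<Rightarrow> 'd) \<Rightarrow> 'd \<Rightarrow> 'd set" where
  "orbit f e = {(f ^^ k) e | k. True}"

definition cyc_path :: "('d \<Rightarrow> 'd) \<Rightarrow> 'd \<Rightarrow> nat \<Rightarrow> 'd list" where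
  "cyc_path nx e l = map (\<lambda>t. (nx ^^ t) e) [0..<l]"

definition vtx :: "('d \<Rightarrow> 'd) \<Rightarrow> ('d \<Rightarrow> 'd) \<Rightarrow> 'd \<Rightarrow> 'd set" where
  "vtx rv nx e = orbit (\<lambda>x. nx (rv x)) e"

definition inv_path :: "('d \<Rightarrow> 'd) \<Rightarrow> 'd list \<Rightarrow> 'd list" where
  "inv_path rv p = rev (map rv p)"

definition is_map :: "'d set \<Rightarrow> ('d \<Rightarrow> 'd) \<Rightarrow> ('d \<Rightarrow> 'd) \<Rightarrow> 'd set \<Rightarrow> bool" where
  "is_map D rv nx FD \<longleftrightarrow>
     finite D \<and>
     (\<forall>e\<in>D. rv e \<in> D \<and> rv e \<noteq> e \<and> rv (rv e) = e) \<and>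
     bij_betw nx D D \<and>
     (\<forall>e\<in>D. \<forall>e'\<in>D. (\<lambda>x y. y = rv x \<or> y = nx x)\<^sup>*\<^sup>* e e') \<and>
     (D \<noteq> {} \<longrightarrow>
        int (card {vtx rv nx e | e. e \<in> D}) - int (card D div 2)
          + int (card {orbit nx e | e. e \<in> D}) = 2) \<and>
     FD \<subseteq> D \<and> (\<forall>e\<in>FD. nx e \<in> FD)"

text \<open>A diagram over the presentation with relators R: a map with labels lab on darts,
  inverse darts having inverse labels, and every face contour (read along nx,
  i.e. counterclockwise) having a cyclic representative labelled by an element of R^{+-1}.\<close>
definition is_diagram ::
  "nat \<Rightarrow> letter list set \<Rightarrow> 'd set \<Rightarrow> ('d \<Rightarrow> 'd) \<Rightarrow> ('d \<Rightarrow> 'd) \<Rightarrow> ('d \<Rightarrow> letter) \<Rightarrow> 'd set \<Rightarrow> bool" where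
  "is_diagram n R D rv nx lab FD \<longleftrightarrow>
     is_map D rv nx FD \<and>
     (\<forall>e\<in>D. 1 \<le> fst (lab e) \<and> fst (lab e) \<le> n \<and> lab (rv e) = inv_letter (lab e)) \<and>
     (\<forall>e\<in>FD. \<exists>e'\<in>orbit nx e.
        map lab (cyc_path nx e' (card (orbit nx e))) \<in> R \<union> inv_word ` R)"

text \<open>Faces are the nx-orbits of darts in FD; the face of e has contour the cyclic path
  cyc_path nx e (card (orbit nx e)).\<close>
definition weakly_reduced ::
  "'d set \<Rightarrow> ('d \<Rightarrow> 'd) \<Rightarrow> ('d \<Rightarrow> 'd) \<Rightarrow> ('d \<Rightarrow> letter) \<Rightarrow> 'd set \<Rightarrow> bool" where
  "weakly_reduced D rv nx lab FD \<longleftrightarrow>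
     \<not> (\<exists>e1\<in>FD. \<exists>e2\<in>FD. orbit nx e1 \<noteq> orbit nx e2 \<and>
          (let p1 = cyc_path nx e1 (card (orbit nx e1));
               p2 = inv_path rv (cyc_path nx e2 (card (orbit nx e2)))
           in p1 \<noteq> [] \<and> p2 \<noteq> [] \<and> hd p1 = hd p2 \<and> map lab p1 = map lab p2))"

definition contour_subpaths :: "('d \<Rightarrow> 'd) \<Rightarrow> 'd \<Rightarrow> 'd list set" where
  "contour_subpaths nx e =
     {cyc_path nx e' q | e' q. e' \<in> orbit nx e \<and> 0 < q \<and> q \<le> card (orbit nx e)}"

definition special_sel :: "nat \<Rightarrow> ('d \<Rightarrow> 'd) \<Rightarrow> ('d \<Rightarrow> letter) \<Rightarrow> 'd set \<Rightarrow> 'd list set" where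
  "special_sel n nx lab FD =
     {p. \<exists>e\<in>FD. \<exists>l m j q.
          l \<le> card (orbit nx e) \<and>
          real l > real n / (2 * real n - 2) * real (card (orbit nx e)) \<and>
          (map lab (cyc_path nx e l) = block_word n m \<or>
           map lab (cyc_path nx e l) = inv_word (block_word n m)) \<and>
          0 < q \<and> j + q \<le> l \<and> p = cyc_path nx ((nx ^^ j) e) q}"

definition is_subpath :: "'d list \<Rightarrow> 'd list \<Rightarrow> bool" where
  "is_subpath p q \<longleftrightarrow> (\<exists>a b. q = a @ p @ b)"

text \<open>Oriented arc: a nontrivial simple path (vertices pairwise distinct, except that
  the initial and terminal vertex may coincide) all of whose intermediate vertices
  have degree 2 (degree = number of darts with tail at the vertex).\<close>
definition oriented_arc :: "'d set \<Rightarrow> ('d \<Rightarrow> 'd) \<Rightarrow> ('d \<Rightarrow> 'd) \<Rightarrow> 'd list \<Rightarrow> bool" where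
  "oriented_arc D rv nx p \<longleftrightarrow>
     p \<noteq> [] \<and> set p \<subseteq> D \<and>
     (\<forall>i. Suc i < length p \<longrightarrow> vtx rv nx (rv (p ! i)) = vtx rv nx (p ! Suc i)) \<and>
     distinct (map (vtx rv nx) p) \<and> distinct (map (\<lambda>e. vtx rv nx (rv e)) p) \<and>
     (\<forall>i. Suc i < length p \<longrightarrow> card (vtx rv nx (rv (p ! i))) = 2)"

definition cond_B ::
  "real \<Rightarrow> real \<Rightarrow> 'd set \<Rightarrow> ('d \<Rightarrow> 'd) \<Rightarrow> ('d \<Rightarrow> 'd) \<Rightarrow> 'd set \<Rightarrow> 'd list set \<Rightarrow> bool" where
  "cond_B l1 l2 D rv nx FD S \<longleftrightarrow>
     (\<forall>e\<in>FD.
        (\<exists>p. p \<in> S \<and> p \<in> contour_subpaths nx e) \<and>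
        (\<forall>p q. (p \<in> S \<and> p \<in> contour_subpaths nx e \<and>
                 \<not> (\<exists>p'. p' \<in> S \<and> p' \<in> contour_subpaths nx e \<and> p' \<noteq> p \<and> is_subpath p p')) \<and>
               (q \<in> S \<and> q \<in> contour_subpaths nx e \<and>
                 \<not> (\<exists>q'. q' \<in> S \<and> q' \<in> contour_subpaths nx e \<and> q' \<noteq> q \<and> is_subpath q q'))
               \<longrightarrow> p = q) \<and>
        (\<exists>p. p \<in> S \<and> p \<in> contour_subpaths nx e \<and>
             real (length p) \<ge> (1 - l1) * real (card (orbit nx e))) \<and>
        (\<forall>p. oriented_arc D rv nx p \<and> p \<in> S \<and> inv_path rv p \<in> S \<and>
             (p \<in> contour_subpaths nx e \<or> inv_path rv p \<in> contour_subpaths nx e)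
             \<longrightarrow> real (length p) \<le> l2 * real (card (orbit nx e))))"

end

theory Submission
  imports Defs
begin

text \<open>Every face contour reads, from a suitable dart, a relator r_j = x_1^m ... x_n^m w^{-1}
  or its inverse. Its block x_1^m ... x_n^m covers more than n/(2n-2) of the contour, and since
  w is shorter than one syllable x_i^m, does not start with x_1^{+-1} and does not end with
  x_n^{+-1}, a window of that length reading a block can only be the block itself. So the
  special selection of a face consists of the subpaths of its block: this gives B_0, and
  B_1 because |w| \<le> l1 |r_j|. For B_2, a double-selected path p lies in the blocks of two
  faces with opposite orientations. Comparing the syllable indices read along p and p^{-1}
  shows that either p is at most two syllables long, so |p| \<le> 2m \<le> (2/n) |\<partial>\<Pi>|, or the
  two blocks have the same syllable length and are aligned exactly; as the m_j are distinct,
  the two faces then carry r_j and r_j^{-1} glued as mirror images, an immediately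
  cancellable pair.\<close>

section \<open>Orbits of an injective self-map of a finite set\<close>

lemma funpow_in_closed:
  assumes "f ` D \<subseteq> D" "e \<in> D" shows "(f ^^ k) e \<in> D"
  by (induction k) (use assms in auto)

lemma funpow_funpow: "(f ^^ i) ((f ^^ j) e) = (f ^^ (i + j)) e"
  by (simp add: funpow_add)

lemma funpow_in_orbit [simp]: "(f ^^ k) e \<in> orbit f e"
  unfolding orbit_def by blast

lemma self_in_orbit [simp]: "e \<in> orbit f e"
  using funpow_in_orbit[of 0 f] by simp

lemma funpow_cancel_inj_on:
  assumes "inj_on f D" "f ` D \<subseteq> D" "e \<in> D" "(f ^^ i) e = (f ^^ (i + d)) e"
  shows "(f ^^ d) e = e"
  using assms(4)
proof (induction i)
  case (Suc i)
  then have "f ((f ^^ i) e) = f ((f ^^ (i + d)) e)" by simp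
  then show ?case
    using Suc.IH inj_onD[OF assms(1)] funpow_in_closed[OF assms(2,3)] by blast
qed simp

lemma periodic_point_exists:
  assumes "finite D" "inj_on f D" "f ` D \<subseteq> D" "e \<in> D"
  obtains P where "0 < P" "(f ^^ P) e = e"
proof -
  have "range (\<lambda>i. (f ^^ i) e) \<subseteq> D" using funpow_in_closed[OF assms(3,4)] by auto
  then have "finite (range (\<lambda>i. (f ^^ i) e))" using assms(1) finite_subset by blast
  then have "\<not> inj (\<lambda>i. (f ^^ i) e)" using finite_imageD by blast
  then obtain i j where "i < j" "(f ^^ i) e = (f ^^ j) e"
    unfolding inj_def by (metis linorder_neqE_nat)
  then obtain d where "0 < d" "(f ^^ i) e = (f ^^ (i + d)) e"
    using less_imp_add_positive by blast
  with funpow_cancel_inj_on[OF assms(2-4)] that show thesis by blast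
qed

lemma card_orbit_period:
  assumes "finite D" "inj_on f D" "f ` D \<subseteq> D" "e \<in> D"
  shows "0 < card (orbit f e)" "(f ^^ card (orbit f e)) e = e"
proof -
  define P where "P = (LEAST P. 0 < P \<and> (f ^^ P) e = e)"
  obtain P0 where "0 < P0" "(f ^^ P0) e = e" using periodic_point_exists[OF assms] .
  then have P: "0 < P" "(f ^^ P) e = e"
    unfolding P_def by (metis (mono_tags, lifting) LeastI)+
  have "orbit f e = (\<lambda>i. (f ^^ i) e) ` {..<P}"
  proof (intro equalityI subsetI)
    fix x assume "x \<in> orbit f e"
    then obtain k where "x = (f ^^ k) e" unfolding orbit_def by blast
    then have "x = (f ^^ (k mod P)) e" using funpow_mod_eq[OF P(2)] by simp
    then show "x \<in> (\<lambda>i. (f ^^ i) e) ` {..<P}" using P(1) by simp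
  qed (auto simp: orbit_def)
  moreover have "inj_on (\<lambda>i. (f ^^ i) e) {..<P}"
  proof (rule inj_onI)
    have no_return: "(f ^^ i) e \<noteq> (f ^^ j) e" if "i < j" "j < P" for i j
    proof
      assume "(f ^^ i) e = (f ^^ j) e"
      then have "(f ^^ (j - i)) e = e"
        using funpow_cancel_inj_on[OF assms(2-4), of i "j - i"] that by simp
      moreover have "j - i < P" using that by linarith
      ultimately show False
        using not_less_Least[of "j - i" "\<lambda>P. 0 < P \<and> (f ^^ P) e = e"] that unfolding P_def by simp
    qed
    show "i = j" if "i \<in> {..<P}" "j \<in> {..<P}" "(f ^^ i) e = (f ^^ j) e" for i j
      using no_return[of i j] no_return[of j i] that by (cases i j rule: linorder_cases) auto
  qed
  ultimately have "card (orbit f e) = P" by (simp add: card_image)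
  then show "0 < card (orbit f e)" "(f ^^ card (orbit f e)) e = e" using P by simp_all
qed

lemma orbit_funpow_periodic:
  assumes "(f ^^ P) e = e" "0 < P"
  shows "orbit f ((f ^^ t) e) = orbit f e"
proof -
  have "(f ^^ k) e = (f ^^ (k + P * t - t)) ((f ^^ t) e)" for k
  proof -
    have "(f ^^ k) e = (f ^^ (k + P * t)) e" by (metis assms(1) funpow_mod_eq mod_mult_self2)
    also have "k + P * t = (k + P * t - t) + t" using assms(2) by (simp add: trans_le_add2)
    finally show ?thesis by (simp add: funpow_add)
  qed
  then show ?thesis unfolding orbit_def by (auto simp: funpow_funpow)
qed

lemma orbit_eq_if_mem_periodic:
  assumes "(f ^^ P) e = e" "0 < P" "e' \<in> orbit f e"
  shows "orbit f e' = orbit f e"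
proof -
  obtain t where "e' = (f ^^ t) e" using assms(3) unfolding orbit_def by blast
  then show ?thesis using orbit_funpow_periodic[OF assms(1,2)] by simp
qed

section \<open>Cyclic paths and words\<close>

lemma length_cyc_path [simp]: "length (cyc_path f e l) = l"
  by (simp add: cyc_path_def)

lemma nth_cyc_path [simp]: "i < l \<Longrightarrow> cyc_path f e l ! i = (f ^^ i) e"
  by (simp add: cyc_path_def)

lemma cyc_path_eq_Nil_iff [simp]: "cyc_path f e l = [] \<longleftrightarrow> l = 0"
  by (simp add: cyc_path_def)

lemma hd_cyc_path: "0 < l \<Longrightarrow> hd (cyc_path f e l) = e"
  by (simp add: hd_conv_nth)

lemma last_cyc_path: "0 < l \<Longrightarrow> last (cyc_path f e l) = (f ^^ (l - 1)) e"
  by (simp add: last_conv_nth)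

lemma cyc_path_from_funpow: "cyc_path f ((f ^^ j) e) q = map (\<lambda>t. (f ^^ t) e) [j..<j + q]"
proof -
  have "[j..<j + q] = map (\<lambda>i. i + j) [0..<q]" by (simp add: map_add_upt add.commute)
  then show ?thesis unfolding cyc_path_def by (simp add: funpow_add)
qed

lemma cyc_path_is_subpath:
  assumes "j + q \<le> l"
  shows "is_subpath (cyc_path f ((f ^^ j) e) q) (cyc_path f e l)"
proof -
  obtain r where l: "l = j + q + r" using assms le_Suc_ex by blast
  have "[0..<l] = [0..<j] @ [j..<j + q] @ [j + q..<l]"
    unfolding l using upt_add_eq_append[of 0 j q] upt_add_eq_append[of 0 "j + q" r]
      upt_add_eq_append[of j q r] by simp
  then have "cyc_path f e l = cyc_path f e j @ cyc_path f ((f ^^ j) e) q @ map (\<lambda>t. (f ^^ t) e) [j + q..<l]"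
    unfolding cyc_path_from_funpow by (simp add: cyc_path_def)
  then show ?thesis unfolding is_subpath_def by blast
qed

lemma cyc_path_rotate:
  assumes "(f ^^ l) e = e"
  shows "cyc_path f ((f ^^ k) e) l = rotate k (cyc_path f e l)"
proof (rule nth_equalityI)
  fix i assume "i < length (cyc_path f ((f ^^ k) e) l)"
  then have "i < l" by simp
  then show "cyc_path f ((f ^^ k) e) l ! i = rotate k (cyc_path f e l) ! i"
    using funpow_mod_eq[OF assms, of "k + i"] by (simp add: nth_rotate funpow_add add.commute)
qed simp

lemma length_inv_path [simp]: "length (inv_path rv p) = length p"
  by (simp add: inv_path_def)

lemma nth_inv_path: "i < length p \<Longrightarrow> inv_path rv p ! i = rv (p ! (length p - 1 - i))"
  by (simp add: inv_path_def rev_nth)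

lemma hd_inv_path: "p \<noteq> [] \<Longrightarrow> hd (inv_path rv p) = rv (last p)"
  by (simp add: inv_path_def hd_rev last_map)

lemma inv_letter_inv_letter [simp]: "inv_letter (inv_letter a) = a"
  and fst_inv_letter [simp]: "fst (inv_letter a) = fst a"
  and snd_inv_letter [simp]: "snd (inv_letter a) = (\<not> snd a)"
  by (simp_all add: inv_letter_def)

lemma length_inv_word [simp]: "length (inv_word w) = length w"
  by (simp add: inv_word_def)

lemma nth_inv_word: "i < length w \<Longrightarrow> inv_word w ! i = inv_letter (w ! (length w - 1 - i))"
  by (simp add: inv_word_def rev_nth)

lemma inv_word_inv_word [simp]: "inv_word (inv_word w) = w"
  by (simp add: inv_word_def rev_map comp_def)

lemma inv_word_append: "inv_word (u @ v) = inv_word v @ inv_word u"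
  by (simp add: inv_word_def)

text \<open>The letter of the a-th syllable (counting from 0) of x_1^m ... x_n^m if s,
  and of x_n^{-m} ... x_1^{-m} if not s.\<close>
definition block_letter :: "nat \<Rightarrow> bool \<Rightarrow> nat \<Rightarrow> letter" where
  "block_letter n s a = (if s then (Suc a, True) else (n - a, False))"

lemma snd_block_letter [simp]: "snd (block_letter n s a) = s"
  by (simp add: block_letter_def)

lemma inj_on_block_letter: "inj_on (block_letter n s) {..<n}"
  by (rule inj_onI) (auto simp: block_letter_def split: if_splits)

lemma block_word_eq_map: "block_word n m = map (\<lambda>x. block_letter n True (x div m)) [0..<n * m]"
proof (induction n)
  case (Suc n)
  have "(n * m + i) div m = n" if "i < m" for i
    using that by (simp add: div_nat_eqI mult.commute)
  then have "replicate m (Suc n, True) = map (\<lambda>x. block_letter (Suc n) True (x div m)) [n * m..<n * m + m]"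
    by (intro nth_equalityI) (simp_all add: block_letter_def)
  moreover have "[0..<Suc n * m] = [0..<n * m] @ [n * m..<n * m + m]"
    using upt_add_eq_append[of 0 "n * m" m] by (simp add: add.commute)
  ultimately show ?case
    using Suc.IH by (simp add: block_word_def block_letter_def)
qed (simp add: block_word_def)

lemma length_block_word [simp]: "length (block_word n m) = n * m"
  by (simp add: block_word_eq_map)

lemma reversed_syllable_index:
  assumes "x < n * m"
  shows "Suc ((n * m - 1 - x) div m) = n - x div m"
proof -
  have m: "0 < m" using assms by (cases m) auto
  have "x div m < n" using assms m by (simp add: div_less_iff_less_mult)
  then obtain c where c: "n = Suc (x div m + c)" using less_imp_Suc_add by blast
  have "n * m = x div m * m + m + c * m" using c by (simp add: algebra_simps)
  moreover have "x = x div m * m + x mod m" by simp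
  moreover have "x mod m < m" using m by simp
  ultimately have "n * m - 1 - x = (m - 1 - x mod m) + c * m" by linarith
  then have "(n * m - 1 - x) div m = c" using m by simp
  then show ?thesis using c by simp
qed

lemma inv_block_word_eq_map:
  "inv_word (block_word n m) = map (\<lambda>x. block_letter n False (x div m)) [0..<n * m]"
proof (rule nth_equalityI)
  fix x assume "x < length (inv_word (block_word n m))"
  then have x: "x < n * m" by simp
  then have "n * m - 1 - x < n * m" by linarith
  then show "inv_word (block_word n m) ! x = map (\<lambda>x. block_letter n False (x div m)) [0..<n * m] ! x"
    using x reversed_syllable_index[OF x]
    by (simp add: nth_inv_word block_word_eq_map block_letter_def inv_letter_def)
qed simp

lemma block_word_or_inv_eq_map:
  "map (\<lambda>x. block_letter n s (x div m)) [0..<n * m] =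
     (if s then block_word n m else inv_word (block_word n m))"
  using block_word_eq_map[of n m] inv_block_word_eq_map[of n m] by (cases s) simp_all

lemma inv_block_letter_eq:
  assumes "inv_letter (block_letter n s x) = block_letter n s' y" "x < n" "y < n"
  shows "s' = (\<not> s)" "Suc (x + y) = n"
  using assms by (auto simp: block_letter_def inv_letter_def split: if_splits)

section \<open>Windows in cyclic words and syllable arithmetic\<close>

lemma cyclic_window_meets_prefix:
  fixes l L N t :: nat
  assumes "0 < l" "l \<le> L" "L < N + l"
  shows "\<exists>i<l. (t + i) mod L < N"
proof -
  have L: "0 < L" using assms by linarith
  have N: "0 < N" using assms by linarith
  show ?thesis
  proof (cases "t mod L < N")
    case True
    then show ?thesis using assms(1) by (intro exI[of _ 0]) simp
  next
    case False
    have "(t + (L - t mod L)) mod L = (t mod L + (L - t mod L)) mod L"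
      by (rule mod_add_left_eq[symmetric])
    also have "\<dots> = 0" using L by simp
    finally have "(t + (L - t mod L)) mod L < N" using N by simp
    moreover have "L - t mod L < l" using False assms(1,3) by linarith
    ultimately show ?thesis by blast
  qed
qed

text \<open>The cyclic word c of length L begins with the block (g 0)^M ... (g (n-1))^M and does not
  end with g 0. A window (g 0)^m ... (g (n-1))^m starting at t cannot start in the tail (it
  would run through position 0 and force c (L - 1) = g 0), so it starts in the first syllable;
  its first syllable change then gives m = M - t and its second one t = 0.\<close>
lemma block_window_unique:
  fixes c g :: "nat \<Rightarrow> 'a"
  assumes block: "\<And>x. x < n * M \<Longrightarrow> c x = g (x div M)"
    and window: "\<And>i. i < n * m \<Longrightarrow> c ((t + i) mod L) = g (i div m)"
    and inj: "inj_on g {..<n}" and last: "c (L - 1) \<noteq> g 0"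
    and n: "3 \<le> n" and M: "0 < M" "M < n * m" "n * M < L"
    and m: "n * m \<le> L" "L - n * M < n * m" and t: "t < L"
  shows "t = 0 \<and> m = M"
proof -
  have m0: "0 < m" using M by (cases m) auto
  have g_eq: "a = b" if "a < n" "b < n" "g a = g b" for a b
    using inj that by (auto dest: inj_onD)
  have syllable_lt: "i div m < n" if "i < n * m" for i
    using that m0 by (simp add: div_less_iff_less_mult)
  have window': "c (t + i) = g (i div m)" if "i < n * m" "t + i < L" for i
    using window[OF that(1)] that(2) by simp
  have "t < n * M"
  proof (rule ccontr)
    assume "\<not> t < n * M"
    then have i: "L - t < n * m" "t + (L - t) = L" using m t by linarith+
    have "g ((L - t) div m) = g 0"
      using window[OF i(1)] block[of 0] n M by (simp add: i(2))
    then have "(L - t) div m = 0" using g_eq syllable_lt[OF i(1)] n by simp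
    then have "L - t - 1 < n * m" "(L - t - 1) div m = 0" using i(1) by (auto simp: div_eq_0_iff)
    then have "c (L - 1) = g 0" using window'[of "L - t - 1"] t by simp
    then show False using last by simp
  qed
  then have "g (t div M) = g 0" using block window'[of 0] M t m0 n by simp
  moreover have "t div M < n" using \<open>t < n * M\<close> M by (simp add: div_less_iff_less_mult)
  ultimately have "t div M = 0" using g_eq n by simp
  then have tM: "t < M" using M by (simp add: div_eq_0_iff)
  have M_lt: "M < n * M" using n M by simp
  have "g ((M - t) div m) = g 1"
    using window'[of "M - t"] block[of M] M M_lt tM by simp
  then have "(M - t) div m = 1" using g_eq syllable_lt[of "M - t"] M n by simp
  then have "m \<le> M - t" by (metis div_less not_le zero_neq_one)
  moreover have "M - t - 1 < n * m" "t + (M - t - 1) = M - 1" "M - 1 < n * M" "M - 1 < L"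
    using M M_lt tM by linarith+
  then have "g ((M - t - 1) div m) = g 0"
    using window'[of "M - t - 1"] block[of "M - 1"] M by simp
  then have "(M - t - 1) div m = 0" using g_eq syllable_lt[of "M - t - 1"] M n by simp
  then have "M - t - 1 < m" using m0 by (simp add: div_eq_0_iff)
  ultimately have mt: "m = M - t" by linarith
  show ?thesis
  proof (rule ccontr)
    assume "\<not> (t = 0 \<and> m = M)"
    then have "0 < t" using mt by (cases "t = 0") simp_all
    have "3 * M \<le> n * M" "3 * m \<le> n * m" using n by simp_all
    then have i: "2 * m < n * m" "t + 2 * m < L" "2 * M - t < n * M" "t + 2 * m = 2 * M - t"
      using mt tM m0 M by linarith+
    have "(2 * M - t) div M = 1" using tM \<open>0 < t\<close> by (intro div_nat_eqI) auto
    then have "g 2 = g 1" using window'[OF i(1,2)] block[OF i(3)] m0 by (simp add: i(4))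
    then show False using g_eq[of 2 1] n by simp
  qed
qed

lemma syllable_boundaries_match:
  fixes a b q A B n :: nat
  assumes "\<forall>i<q. Suc ((a + q - 1 - i) div A + (b + i) div B) = n" "1 \<le> i" "i < q"
  shows "B dvd b + i \<longleftrightarrow> A dvd a + q - i"
proof -
  obtain i' where i': "i = Suc i'" using assms(2) by (cases i) auto
  have "i' < q" using assms(3) i' by simp
  then have before: "Suc ((a + q - 1 - i') div A + (b + i') div B) = n"
    using assms(1) by blast
  have after: "Suc ((a + q - 1 - i) div A + (b + i) div B) = n"
    using assms(1,3) by blast
  have shift: "a + q - 1 - i' = a + q - i" and up: "Suc (b + i') = b + i"
    and down: "Suc (a + q - 1 - i) = a + q - i"
    using assms i' by linarith+
  have "(a + q - i) div A = (if (a + q - i) mod A = 0 then Suc ((a + q - 1 - i) div A) else (a + q - 1 - i) div A)"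
    using div_Suc[of "a + q - 1 - i" A] unfolding down .
  moreover have "(b + i) div B = (if (b + i) mod B = 0 then Suc ((b + i') div B) else (b + i') div B)"
    using div_Suc[of "b + i'" B] unfolding up .
  moreover note before[unfolded shift]
  ultimately have "((a + q - i) mod A = 0) = ((b + i) mod B = 0)"
    using after by (auto split: if_splits)
  then show ?thesis by (simp add: dvd_eq_mod_eq_0)
qed

lemma dvd_add_diff_mod:
  fixes b B :: nat
  assumes "0 < B"
  shows "B dvd b + (B - b mod B)"
proof -
  have "B * (b div B) + b mod B = b" by (rule mult_div_mod_eq)
  moreover have "b mod B < B" using assms by simp
  ultimately have "b + (B - b mod B) = B * (b div B) + B" by linarith
  then show ?thesis by simp
qed

lemma syllable_length_eq:
  fixes a b q A B :: nat
  assumes match: "\<And>i. 1 \<le> i \<Longrightarrow> i < q \<Longrightarrow> B dvd b + i \<longleftrightarrow> A dvd a + q - i"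
    and q: "2 * B < q" and A: "0 < A" and B: "0 < B"
  shows "A = B"
proof -
  define i1 where "i1 = B - b mod B"
  have i1: "1 \<le> i1" "i1 \<le> B" "B dvd b + i1"
    using B dvd_add_diff_mod[OF B] unfolding i1_def by (simp_all add: Suc_leI)
  have a1: "A dvd a + q - i1" using match i1 q by simp
  have "B dvd b + (i1 + B)" using i1(3) by (simp add: add.assoc[symmetric])
  then have a2: "A dvd a + q - (i1 + B)" using match[of "i1 + B"] i1 q by simp
  have "(a + q - i1) - (a + q - (i1 + B)) = B" using i1 q by linarith
  then have "A dvd B" using dvd_diff_nat[OF a1 a2] by simp
  then have "A \<le> B" using B by (simp add: dvd_imp_le)
  moreover have "\<not> A < B"
  proof
    assume "A < B"
    have "a + q - (i1 + A) = (a + q - i1) - A" by simp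
    then have "A dvd a + q - (i1 + A)" using dvd_diff_nat[OF a1 dvd_refl[of A]] by simp
    then have "B dvd (b + i1) + A" using match[of "i1 + A"] i1 q \<open>A < B\<close> by (simp add: add.assoc)
    then have "B dvd A" using i1(3) by (simp add: dvd_add_right_iff)
    then show False using \<open>A < B\<close> A by (simp add: nat_dvd_not_less)
  qed
  ultimately show ?thesis by simp
qed

text \<open>The hypothesis says that a stretch of length q read backwards in x_1^A ... x_n^A from
  offset a and forwards in x_n^{-B} ... x_1^{-B} from offset b has inverse letters
  (syllable indices summing to n - 1). Syllable boundaries must then occur at the same
  places, which forces A = B as soon as q exceeds two syllables.\<close>
lemma syllable_alignment:
  fixes a b q A B n :: nat
  assumes h: "\<forall>i<q. Suc ((a + q - 1 - i) div A + (b + i) div B) = n" and A: "0 < A" and B: "0 < B"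
  shows "(q \<le> 2 * A \<and> q \<le> 2 * B) \<or> (A = B \<and> a + b + q = n * A)"
proof (cases "q \<le> 2 * A \<and> q \<le> 2 * B")
  case long: False
  have match: "B dvd b + i \<longleftrightarrow> A dvd a + q - i" if "1 \<le> i" "i < q" for i
    using syllable_boundaries_match[OF h that] .
  have match': "A dvd a + i \<longleftrightarrow> B dvd b + q - i" if "1 \<le> i" "i < q" for i
    using match[of "q - i"] that by (simp add: add_diff_assoc)
  have AB: "A = B"
    using long syllable_length_eq[OF match _ A B] syllable_length_eq[OF match' _ B A]
    by (metis not_le)
  define i1 where "i1 = B - b mod B"
  have i1: "1 \<le> i1" "i1 < q" "B dvd b + i1"
    using B dvd_add_diff_mod[OF B] long AB unfolding i1_def by (simp_all add: Suc_leI)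
  obtain u where u: "a + q - i1 = A * u" using match i1 by (metis dvdE)
  obtain v where v: "b + i1 = A * v" using i1(3) AB by (metis dvdE)
  have "0 < u" using u i1 by (cases u) auto
  then have "u * A = (u - 1) * A + A" by (metis Suc_diff_1 mult_Suc add.commute)
  then have "a + q - 1 - i1 = (A - 1) + (u - 1) * A" using u A by (simp add: mult.commute)
  then have "(a + q - 1 - i1) div A = u - 1" using A div_mult_self1[of A "A - 1" "u - 1"] by simp
  moreover have "(b + i1) div B = v" using v AB A by simp
  ultimately have "n = u + v" using h i1 \<open>0 < u\<close> by force
  then have "n * A = A * u + A * v" by (simp add: algebra_simps)
  then show ?thesis using u v i1 AB by linarith
qed simp

lemma inv_word_rotate:
  assumes "r \<le> length w"
  shows "inv_word (rotate r w) = rotate (length w - r) (inv_word w)"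
proof (cases "r = 0")
  case False
  then have "(length w - r) mod length w = length w - r" using assms by simp
  then show ?thesis
    using assms rotate_rev[of "length w - r" "map inv_letter w"]
    by (simp add: inv_word_def rotate_map)
qed (simp add: inv_word_def)

section \<open>Diagrams over relators x_1^m ... x_n^m w^{-1}\<close>

locale block_relator_diagram =
  fixes n :: nat and l1 :: real and J :: "'i set" and ms :: "'i \<Rightarrow> nat" and ws :: "'i \<Rightarrow> letter list"
    and R :: "letter list set"
    and D :: "'d set" and rv nx :: "'d \<Rightarrow> 'd" and lab :: "'d \<Rightarrow> letter" and FD :: "'d set"
  assumes n: "3 \<le> n"
    and l1_small: "4 * l1 * real n \<le> 1"
    and relators: "R \<subseteq> (\<lambda>j. relator n (ms j) (ws j)) ` J"
    and inj_ms: "inj_on ms J"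
    and ws_nonempty: "j \<in> J \<Longrightarrow> ws j \<noteq> []"
    and ws_hd: "j \<in> J \<Longrightarrow> fst (hd (ws j)) \<noteq> 1"
    and ws_last: "j \<in> J \<Longrightarrow> fst (last (ws j)) \<noteq> n"
    and ws_short: "j \<in> J \<Longrightarrow> real (length (ws j)) \<le> l1 * real (n * ms j + length (ws j))"
    and diagram: "is_diagram n R D rv nx lab FD"
    and reduced: "weakly_reduced D rv nx lab FD"
begin

abbreviation perimeter :: "'d \<Rightarrow> nat" where
  "perimeter e \<equiv> card (orbit nx e)"

lemma finite_D: "finite D"
  and rv_rv: "e \<in> D \<Longrightarrow> rv (rv e) = e"
  and inj_on_nx: "inj_on nx D" and nx_D: "nx ` D \<subseteq> D"
  and FD_D: "FD \<subseteq> D" and nx_FD: "e \<in> FD \<Longrightarrow> nx e \<in> FD"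
  using diagram unfolding is_diagram_def is_map_def bij_betw_def by auto

lemma lab_rv: "e \<in> D \<Longrightarrow> lab (rv e) = inv_letter (lab e)"
  using diagram unfolding is_diagram_def by auto

lemma face_relator:
  "e \<in> FD \<Longrightarrow> \<exists>e'\<in>orbit nx e. map lab (cyc_path nx e' (perimeter e)) \<in> R \<union> inv_word ` R"
  using diagram unfolding is_diagram_def by auto

lemma funpow_nx_D: "e \<in> D \<Longrightarrow> (nx ^^ k) e \<in> D"
  using funpow_in_closed[OF nx_D] .

lemma funpow_nx_FD: "e \<in> FD \<Longrightarrow> (nx ^^ k) e \<in> FD"
  by (induction k) (auto simp: nx_FD)

lemma perimeter_pos: "e \<in> D \<Longrightarrow> 0 < perimeter e"
  and funpow_perimeter: "e \<in> D \<Longrightarrow> (nx ^^ perimeter e) e = e"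
  using card_orbit_period[OF finite_D inj_on_nx nx_D] by blast+

lemma funpow_mod_perimeter: "e \<in> D \<Longrightarrow> (nx ^^ (k mod perimeter e)) e = (nx ^^ k) e"
  using funpow_mod_eq[OF funpow_perimeter] .

lemma orbit_eq_if_mem: "e \<in> D \<Longrightarrow> e' \<in> orbit nx e \<Longrightarrow> orbit nx e' = orbit nx e"
  using orbit_eq_if_mem_periodic[OF funpow_perimeter perimeter_pos] .

lemma orbit_funpow: "e \<in> D \<Longrightarrow> orbit nx ((nx ^^ k) e) = orbit nx e"
  using orbit_eq_if_mem[OF _ funpow_in_orbit] .

lemma orbit_memE:
  assumes "e \<in> D" "e' \<in> orbit nx e"
  obtains t where "t < perimeter e" "e' = (nx ^^ t) e"
proof -
  obtain k where "e' = (nx ^^ k) e" using assms(2) unfolding orbit_def by blast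
  then show thesis
    using that[of "k mod perimeter e"] funpow_mod_perimeter[OF assms(1)] perimeter_pos[OF assms(1)] by simp
qed

lemma contour_labels_funpow:
  "e \<in> D \<Longrightarrow> map lab (cyc_path nx ((nx ^^ k) e) (perimeter e)) = rotate k (map lab (cyc_path nx e (perimeter e)))"
  using cyc_path_rotate[OF funpow_perimeter] by (simp add: rotate_map)

lemma labels_inv_path:
  "set p \<subseteq> D \<Longrightarrow> map lab (inv_path rv p) = inv_word (map lab p)"
  using lab_rv by (induction p) (auto simp: inv_path_def inv_word_def)

lemma set_cyc_path_D: "e \<in> D \<Longrightarrow> set (cyc_path nx e q) \<subseteq> D"
  unfolding cyc_path_def using funpow_nx_D by auto

text \<open>The block of the face starts at b; cyc_path nx b (n * ms j) is then the path s of the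
  special selection.\<close>
definition block_start :: "'d \<Rightarrow> bool \<Rightarrow> 'i \<Rightarrow> bool" where
  "block_start b s j \<longleftrightarrow> b \<in> FD \<and> j \<in> J \<and>
     map lab (cyc_path nx b (perimeter b)) =
       (if s then block_word n (ms j) @ inv_word (ws j) else inv_word (block_word n (ms j)) @ ws j)"

lemma block_start_exists:
  assumes e: "e \<in> FD"
  obtains b s j where "block_start b s j" "b \<in> orbit nx e"
proof -
  have eD: "e \<in> D" using e FD_D by blast
  obtain e' where e': "e' \<in> orbit nx e"
    and lst: "map lab (cyc_path nx e' (perimeter e)) \<in> R \<union> inv_word ` R"
    using face_relator[OF e] by blast
  have same: "orbit nx e' = orbit nx e" using orbit_eq_if_mem[OF eD e'] .
  obtain k where "e' = (nx ^^ k) e" using e' unfolding orbit_def by blast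
  then have e'FD: "e' \<in> FD" using funpow_nx_FD[OF e] by simp
  then have e'D: "e' \<in> D" using FD_D by blast
  obtain r where r: "r \<in> R"
    and "map lab (cyc_path nx e' (perimeter e')) = r \<or> map lab (cyc_path nx e' (perimeter e')) = inv_word r"
    using lst unfolding same by blast
  moreover obtain j where "j \<in> J" "r = relator n (ms j) (ws j)" using r relators by blast
  ultimately consider (pos) "j \<in> J" "map lab (cyc_path nx e' (perimeter e')) = relator n (ms j) (ws j)"
    | (neg) "j \<in> J" "map lab (cyc_path nx e' (perimeter e')) = inv_word (relator n (ms j) (ws j))"
    by blast
  then show thesis
  proof cases
    case pos
    then have "block_start e' True j" using e'FD by (simp add: block_start_def relator_def)
    then show thesis using that e' by blast
  next
    case neg
    define b where "b = (nx ^^ length (ws j)) e'"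
    have "map lab (cyc_path nx b (perimeter b)) = rotate (length (ws j)) (ws j @ inv_word (block_word n (ms j)))"
      using contour_labels_funpow[OF e'D] neg(2) unfolding b_def orbit_funpow[OF e'D]
      by (simp add: relator_def inv_word_append)
    then have "block_start b False j"
      using neg(1) funpow_nx_FD[OF e'FD] unfolding b_def block_start_def by (simp add: rotate_append)
    moreover have "b \<in> orbit nx e" using same orbit_funpow[OF e'D, of "length (ws j)"] unfolding b_def
      by (metis self_in_orbit)
    ultimately show thesis using that by blast
  qed
qed

lemma block_start_D: "block_start b s j \<Longrightarrow> b \<in> D"
  using FD_D unfolding block_start_def by blast

lemma perimeter_block_start:
  "block_start b s j \<Longrightarrow> perimeter b = n * ms j + length (ws j)"
  unfolding block_start_def using length_cyc_path[of nx b "perimeter b"]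
  by (metis add.commute length_append length_block_word length_inv_word length_map)

text \<open>The second claim is where 4 l1 n \<le> 1 is used.\<close>
lemma block_start_sizes:
  assumes "block_start b s j"
  shows "0 < length (ws j)" "length (ws j) < ms j"
    and "real (length (ws j)) \<le> l1 * real (perimeter b)"
proof -
  have j: "j \<in> J" using assms unfolding block_start_def by blast
  show k: "0 < length (ws j)" using ws_nonempty[OF j] by simp
  show short: "real (length (ws j)) \<le> l1 * real (perimeter b)"
    using ws_short[OF j] perimeter_block_start[OF assms] by simp
  have "4 * real n * real (length (ws j)) \<le> (4 * l1 * real n) * real (perimeter b)"
    using mult_left_mono[OF short, of "4 * real n"] by (simp add: algebra_simps)
  also have "\<dots> \<le> real (perimeter b)"
    using mult_right_mono[OF l1_small, of "real (perimeter b)"] by simp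
  finally have "real (4 * n * length (ws j)) \<le> real (n * ms j + length (ws j))"
    using perimeter_block_start[OF assms] by simp
  then have four: "4 * n * length (ws j) \<le> n * ms j + length (ws j)"
    by (simp only: of_nat_le_iff)
  show "length (ws j) < ms j"
  proof (rule ccontr)
    assume "\<not> length (ws j) < ms j"
    then have "n * ms j \<le> n * length (ws j)" by simp
    moreover have "length (ws j) \<le> n * length (ws j)" using n by simp
    ultimately have "4 * n * length (ws j) \<le> 2 * (n * length (ws j))" using four by linarith
    then show False using n k by simp
  qed
qed

lemma block_long:
  assumes "block_start b s j"
  shows "real n / (2 * real n - 2) * real (perimeter b) < real (n * ms j)"
    and "(1 - l1) * real (perimeter b) \<le> real (n * ms j)"
proof -
  have L: "real (perimeter b) = real n * real (ms j) + real (length (ws j))"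
    using perimeter_block_start[OF assms] by simp
  note k = block_start_sizes[OF assms]
  have "1 * real (ms j) \<le> (real n - 2) * real (ms j)"
    using n by (intro mult_right_mono) auto
  then have "real (ms j) \<le> real n * real (ms j) - 2 * real (ms j)"
    by (simp add: algebra_simps)
  moreover have "real (length (ws j)) < real (ms j)" using k(2) by simp
  ultimately have "real (perimeter b) < 2 * (real n * real (ms j)) - 2 * real (ms j)"
    using L by linarith
  then have "real (perimeter b) < (2 * real n - 2) * real (ms j)"
    by (simp add: algebra_simps)
  then have "real n * real (perimeter b) < real n * ((2 * real n - 2) * real (ms j))"
    using n by simp
  moreover have "0 < 2 * real n - 2" using n by simp
  ultimately show "real n / (2 * real n - 2) * real (perimeter b) < real (n * ms j)"
    by (simp add: field_simps)
  show "(1 - l1) * real (perimeter b) \<le> real (n * ms j)"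
    using L k(3) by (simp add: algebra_simps)
qed

lemma block_start_lab:
  assumes "block_start b s j" "x < n * ms j"
  shows "lab ((nx ^^ x) b) = block_letter n s (x div ms j)"
proof -
  have "x < perimeter b" using assms perimeter_block_start by fastforce
  then have "lab ((nx ^^ x) b) = (if s then block_word n (ms j) else inv_word (block_word n (ms j))) ! x"
    using assms nth_map[of x "cyc_path nx b (perimeter b)" lab] unfolding block_start_def
    by (auto simp: nth_append)
  also have "\<dots> = block_letter n s (x div ms j)"
    using assms(2) block_word_or_inv_eq_map[of n s "ms j", symmetric] by simp
  finally show ?thesis .
qed

lemma block_start_labels:
  "block_start b s j \<Longrightarrow> map lab (cyc_path nx b (n * ms j)) = map (\<lambda>x. block_letter n s (x div ms j)) [0..<n * ms j]"
  by (rule nth_equalityI) (simp_all add: block_start_lab)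

text \<open>The letter closing the contour comes from w_j^{-1} or w_j and differs from the first
  letter of the block because w_j neither starts with x_1^{+-1} nor ends with x_n^{+-1}.\<close>
lemma block_start_last_lab:
  assumes "block_start b s j"
  shows "lab ((nx ^^ (perimeter b - 1)) b) \<noteq> block_letter n s 0"
proof -
  have j: "j \<in> J" using assms unfolding block_start_def by blast
  define w where "w = ws j"
  have w: "w \<noteq> []" "fst (hd w) \<noteq> 1" "fst (last w) \<noteq> n"
    using ws_nonempty[OF j] ws_hd[OF j] ws_last[OF j] unfolding w_def by auto
  have "0 < length w" using w(1) by simp
  then have last_pos: "perimeter b - 1 = n * ms j + (length w - 1)" "perimeter b - 1 < perimeter b"
    using perimeter_block_start[OF assms] unfolding w_def by linarith+
  have "lab ((nx ^^ (perimeter b - 1)) b) = map lab (cyc_path nx b (perimeter b)) ! (perimeter b - 1)"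
    using last_pos(2) by simp
  also have "\<dots> = (if s then inv_word w else w) ! (length w - 1)"
    using assms unfolding block_start_def last_pos(1) w_def
    by (simp add: nth_append_length_plus[of "block_word n (ms j)", simplified]
        nth_append_length_plus[of "inv_word (block_word n (ms j))", simplified])
  also have "\<dots> = (if s then inv_letter (hd w) else last w)"
    using w(1) by (simp add: nth_inv_word hd_conv_nth last_conv_nth)
  finally show ?thesis using w by (auto simp: block_letter_def inv_letter_def prod_eq_iff)
qed

lemma long_block_window:
  assumes b: "block_start b s j" and e0: "e0 \<in> orbit nx b"
    and l: "l \<le> perimeter b" "real n / (2 * real n - 2) * real (perimeter b) < real l"
    and labels: "map lab (cyc_path nx e0 l) = map (\<lambda>x. block_letter n s' (x div m)) [0..<n * m]"
  shows "e0 = b" "m = ms j" "s' = s"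
proof -
  define L where "L = perimeter b"
  define M where "M = ms j"
  have bD: "b \<in> D" using block_start_D[OF b] .
  have lnm: "l = n * m" using arg_cong[OF labels, of length] by simp
  have "real L / 2 \<le> real n / (2 * real n - 2) * real L"
    using n by (simp add: field_simps)
  then have L_lt: "L < 2 * (n * m)" using l(2) lnm unfolding L_def by linarith
  obtain t where t: "t < L" "e0 = (nx ^^ t) b" using orbit_memE[OF bD e0] unfolding L_def by blast
  define c where "c x = lab ((nx ^^ x) b)" for x
  have window: "c ((t + i) mod L) = block_letter n s' (i div m)" if "i < n * m" for i
  proof -
    have "c ((t + i) mod L) = lab ((nx ^^ i) e0)"
      unfolding c_def L_def t(2) funpow_mod_perimeter[OF bD] by (simp add: funpow_add add.commute)
    also have "\<dots> = block_letter n s' (i div m)"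
      using arg_cong[OF labels, of "\<lambda>xs. xs ! i"] that lnm by simp
    finally show ?thesis .
  qed
  have block: "c x = block_letter n s (x div M)" if "x < n * M" for x
    using block_start_lab[OF b] that unfolding c_def M_def by blast
  have L_eq: "L = n * M + length (ws j)" using perimeter_block_start[OF b] unfolding L_def M_def .
  note k = block_start_sizes[OF b, folded M_def]
  have "3 * M \<le> n * M" using n by simp
  then have sizes: "M < n * m" "n * M < L" "L - n * M < n * m" "n * m \<le> L" "0 < n * m"
    using L_eq k L_lt l(1) lnm unfolding L_def by linarith+
  show "s' = s"
  proof (rule ccontr)
    assume "s' \<noteq> s"
    have "L < n * M + n * m" using sizes by linarith
    then obtain i where "i < n * m" "(t + i) mod L < n * M"
      using cyclic_window_meets_prefix[OF sizes(5,4)] by blast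
    then show False using window block \<open>s' \<noteq> s\<close> by (metis snd_block_letter)
  qed
  have "t = 0 \<and> m = M"
  proof (rule block_window_unique[of n M c "block_letter n s" m t L])
    show "c (L - 1) \<noteq> block_letter n s 0" using block_start_last_lab[OF b] unfolding c_def L_def .
  qed (use block window \<open>s' = s\<close> inj_on_block_letter n sizes t k in auto)
  then show "e0 = b" "m = ms j" using t unfolding M_def by simp_all
qed

lemma block_start_unique:
  assumes b: "block_start b s j" and b': "block_start b' s' j'" and same: "orbit nx b' = orbit nx b"
  shows "b' = b" "s' = s" "ms j' = ms j"
proof -
  have "b' \<in> orbit nx b" using self_in_orbit[of b' nx] same by simp
  moreover have "n * ms j' \<le> perimeter b" using perimeter_block_start[OF b'] same by simp
  moreover have "real n / (2 * real n - 2) * real (perimeter b) < real (n * ms j')"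
    using block_long(1)[OF b'] same by simp
  ultimately show "b' = b" "s' = s" "ms j' = ms j"
    using long_block_window[OF b _ _ _ block_start_labels[OF b']] by simp_all
qed

lemma special_sel_block:
  assumes "p \<in> special_sel n nx lab FD"
  obtains b s j a q where "block_start b s j" "0 < q" "a + q \<le> n * ms j"
    "p = cyc_path nx ((nx ^^ a) b) q"
proof -
  obtain e l m a q where e: "e \<in> FD" "l \<le> perimeter e"
    "real n / (2 * real n - 2) * real (perimeter e) < real l"
    "map lab (cyc_path nx e l) = block_word n m \<or> map lab (cyc_path nx e l) = inv_word (block_word n m)"
    "0 < q" "a + q \<le> l" "p = cyc_path nx ((nx ^^ a) e) q"
    using assms unfolding special_sel_def by blast
  obtain s' where labels: "map lab (cyc_path nx e l) = map (\<lambda>x. block_letter n s' (x div m)) [0..<n * m]"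
  proof (cases "map lab (cyc_path nx e l) = block_word n m")
    case True
    then show thesis using that[of True] block_word_or_inv_eq_map[of n True m] by simp
  next
    case False
    then show thesis using that[of False] e(4) block_word_or_inv_eq_map[of n False m] by simp
  qed
  obtain b s j where b: "block_start b s j" "b \<in> orbit nx e" using block_start_exists[OF e(1)] .
  have same: "orbit nx b = orbit nx e" using orbit_eq_if_mem b(2) e(1) FD_D by blast
  have "e = b" "m = ms j"
    using long_block_window[OF b(1) _ _ _ labels] e(2,3) same by auto
  moreover have "l = n * m" using arg_cong[OF labels, of length] by simp
  ultimately show thesis using that b e by blast
qed

lemma orbit_of_contour_subpath:
  assumes "p \<in> contour_subpaths nx e" "e \<in> D" "b \<in> D" "0 < q" "p = cyc_path nx ((nx ^^ a) b) q"
  shows "orbit nx e = orbit nx b"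
proof -
  obtain e' q' where e': "e' \<in> orbit nx e" "0 < q'" "p = cyc_path nx e' q'"
    using assms(1) unfolding contour_subpaths_def by blast
  then have "(nx ^^ a) b \<in> orbit nx e" using assms(4,5) nth_cyc_path[of 0] by (metis funpow_0)
  then show ?thesis using orbit_eq_if_mem[OF assms(2)] orbit_funpow[OF assms(3)] by metis
qed

lemma special_sel_subpath_of_block:
  assumes b: "block_start b s j" and e: "e \<in> FD" "b \<in> orbit nx e"
    and p: "p \<in> special_sel n nx lab FD" "p \<in> contour_subpaths nx e"
  shows "is_subpath p (cyc_path nx b (n * ms j))"
proof -
  obtain b' s' j' a q where b': "block_start b' s' j'" "0 < q" "a + q \<le> n * ms j'"
    "p = cyc_path nx ((nx ^^ a) b') q"
    using special_sel_block[OF p(1)] .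
  have eD: "e \<in> D" using e FD_D by blast
  have "orbit nx b' = orbit nx b"
    using orbit_of_contour_subpath[OF p(2) eD block_start_D[OF b'(1)] b'(2,4)]
      orbit_eq_if_mem[OF eD e(2)] by simp
  then have "b' = b" "ms j' = ms j" using block_start_unique[OF b b'(1)] by simp_all
  then show ?thesis using b'(3,4) cyc_path_is_subpath by simp
qed

text \<open>Read from the glued darts, the contours of the two faces give an immediately cancellable
  pair.\<close>
lemma mirrored_blocks_not_glued:
  assumes b1: "block_start b1 True j" and b2: "block_start b2 False j" and a: "a < n * ms j"
    and glued: "rv ((nx ^^ a) b1) = (nx ^^ (n * ms j - a - 1)) b2"
  shows False
proof -
  define M where "M = ms j"
  define w where "w = ws j"
  define L where "L = perimeter b1"
  have b1D: "b1 \<in> D" and b2D: "b2 \<in> D" using block_start_D b1 b2 by auto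
  have L: "L = n * M + length w" "perimeter b2 = L"
    using perimeter_block_start[OF b1] perimeter_block_start[OF b2] unfolding L_def M_def w_def by simp_all
  have "orbit nx b1 \<noteq> orbit nx b2" using block_start_unique(2)[OF b2 b1] by blast
  define e1 where "e1 = (nx ^^ a) b1"
  define e2 where "e2 = (nx ^^ (n * M - a)) b2"
  have e1: "e1 \<in> FD" "orbit nx e1 = orbit nx b1" "perimeter e1 = L"
    using funpow_nx_FD b1 orbit_funpow[OF b1D] unfolding e1_def L_def block_start_def by auto
  have e2: "e2 \<in> FD" "orbit nx e2 = orbit nx b2" "perimeter e2 = L"
    using funpow_nx_FD b2 orbit_funpow[OF b2D] L(2) unfolding e2_def block_start_def by auto
  define p1 where "p1 = cyc_path nx e1 L"
  define p2 where "p2 = inv_path rv (cyc_path nx e2 L)"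
  have "0 < L" using perimeter_pos[OF b1D] unfolding L_def .
  have "map lab p1 = rotate a (block_word n M @ inv_word w)"
    using contour_labels_funpow[OF b1D, of a] b1 unfolding p1_def e1_def L_def M_def w_def block_start_def
    by simp
  moreover have "map lab p2 = rotate a (block_word n M @ inv_word w)"
  proof -
    have "map lab (cyc_path nx e2 L) = rotate (n * M - a) (inv_word (block_word n M) @ w)"
      using contour_labels_funpow[OF b2D, of "n * M - a"] b2 L(2)
      unfolding e2_def M_def w_def block_start_def by simp
    then have "map lab p2 = rotate (L - (n * M - a)) (inv_word w @ block_word n M)"
      using labels_inv_path[OF set_cyc_path_D[OF funpow_nx_D[OF b2D]]] inv_word_rotate[of "n * M - a"] L(1)
      unfolding p2_def e2_def by (simp add: inv_word_append)
    also have "L - (n * M - a) = a + length w" using L(1) a unfolding M_def by linarith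
    finally show ?thesis using rotate_append[of "inv_word w"] by (simp flip: rotate_rotate)
  qed
  moreover have "hd p1 = e1" using \<open>0 < L\<close> unfolding p1_def by (rule hd_cyc_path)
  moreover have "hd p2 = e1"
  proof -
    have "hd p2 = rv ((nx ^^ (L - 1 + (n * M - a))) b2)"
      using \<open>0 < L\<close> unfolding p2_def e2_def by (simp add: hd_inv_path last_cyc_path funpow_funpow)
    also have "L - 1 + (n * M - a) = (n * M - a - 1) + perimeter b2" using L a \<open>0 < L\<close> unfolding M_def by linarith
    also have "rv ((nx ^^ ((n * M - a - 1) + perimeter b2)) b2) = rv (rv e1)"
      using funpow_perimeter[OF b2D] glued unfolding e1_def M_def by (simp add: funpow_add)
    finally show ?thesis using rv_rv funpow_nx_D[OF b1D] unfolding e1_def by simp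
  qed
  ultimately show False
    using reduced e1 e2 \<open>orbit nx b1 \<noteq> orbit nx b2\<close> \<open>0 < L\<close>
    unfolding weakly_reduced_def p1_def p2_def Let_def by (metis length_cyc_path length_inv_path list.size(3) less_not_refl)
qed

lemma overlap_syllable_indices:
  assumes b1: "block_start b1 s1 j1" and b2: "block_start b2 s2 j2"
    and p: "p = cyc_path nx ((nx ^^ a1) b1) q" and ip: "inv_path rv p = cyc_path nx ((nx ^^ a2) b2) q"
    and q: "0 < q" "a1 + q \<le> n * ms j1" "a2 + q \<le> n * ms j2"
  shows "s2 = (\<not> s1)" "\<forall>i<q. Suc ((a1 + q - 1 - i) div ms j1 + (a2 + i) div ms j2) = n"
proof -
  have b1D: "b1 \<in> D" using block_start_D[OF b1] .
  have M: "0 < ms j1" "0 < ms j2" using block_start_sizes(1,2) b1 b2 by fastforce+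
  have letters: "inv_letter (block_letter n s1 ((a1 + q - 1 - i) div ms j1))
      = block_letter n s2 ((a2 + i) div ms j2)"
    and idx: "(a1 + q - 1 - i) div ms j1 < n" "(a2 + i) div ms j2 < n" if "i < q" for i
  proof -
    have x1: "a1 + q - 1 - i < n * ms j1" and x2: "a2 + i < n * ms j2" using that q by linarith+
    have "lab (inv_path rv p ! i) = inv_letter (lab ((nx ^^ (a1 + q - 1 - i)) b1))"
      using that nth_inv_path[of i p rv] p lab_rv funpow_nx_D[OF b1D]
      by (simp add: funpow_funpow add.commute)
    moreover have "lab (inv_path rv p ! i) = lab ((nx ^^ (a2 + i)) b2)"
      using that unfolding ip by (simp add: funpow_funpow add.commute)
    ultimately show "inv_letter (block_letter n s1 ((a1 + q - 1 - i) div ms j1))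
      = block_letter n s2 ((a2 + i) div ms j2)"
      using block_start_lab[OF b1 x1] block_start_lab[OF b2 x2] by simp
    show "(a1 + q - 1 - i) div ms j1 < n" "(a2 + i) div ms j2 < n"
      using x1 x2 M by (simp_all add: div_less_iff_less_mult)
  qed
  show "s2 = (\<not> s1)" using inv_block_letter_eq(1)[OF letters idx] q by blast
  show "\<forall>i<q. Suc ((a1 + q - 1 - i) div ms j1 + (a2 + i) div ms j2) = n"
    using inv_block_letter_eq(2)[OF letters idx] by blast
qed

text \<open>Since the m_j are distinct, only mirror images of the same relator can be aligned.\<close>
lemma overlapping_blocks_short:
  assumes b1: "block_start b1 s1 j1" and b2: "block_start b2 s2 j2"
    and p: "p = cyc_path nx ((nx ^^ a1) b1) q" and ip: "inv_path rv p = cyc_path nx ((nx ^^ a2) b2) q"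
    and q: "0 < q" "a1 + q \<le> n * ms j1" "a2 + q \<le> n * ms j2"
  shows "q \<le> 2 * ms j1 \<and> q \<le> 2 * ms j2"
proof -
  have b1D: "b1 \<in> D" using block_start_D[OF b1] .
  have M: "0 < ms j1" "0 < ms j2" using block_start_sizes(1,2) b1 b2 by fastforce+
  note syllables = overlap_syllable_indices[OF assms]
  from syllable_alignment[OF syllables(2) M] show ?thesis
  proof
    assume aligned: "ms j1 = ms j2 \<and> a1 + a2 + q = n * ms j1"
    then have "j1 = j2" using inj_ms b1 b2 unfolding block_start_def by (auto dest: inj_onD)
    have "rv ((nx ^^ a1) b1) = inv_path rv p ! (q - 1)"
      using q nth_inv_path[of "q - 1" p rv] p by simp
    also have "\<dots> = (nx ^^ (a2 + q - 1)) b2"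
      using q unfolding ip by (simp add: funpow_funpow add.commute)
    also have "a2 + q - 1 = n * ms j1 - a1 - 1" using aligned by linarith
    finally have glued: "rv ((nx ^^ a1) b1) = (nx ^^ (n * ms j1 - a1 - 1)) b2" .
    have "n * ms j1 - a1 - 1 < n * ms j1" using q by linarith
    show ?thesis
    proof (cases s1)
      case True
      then show ?thesis
        using mirrored_blocks_not_glued[OF _ _ _ glued] b1 b2 syllables(1) \<open>j1 = j2\<close> q by simp
    next
      case False
      have "rv ((nx ^^ (n * ms j1 - a1 - 1)) b2) = (nx ^^ (n * ms j1 - (n * ms j1 - a1 - 1) - 1)) b1"
        using glued[symmetric] rv_rv funpow_nx_D[OF b1D] q by simp
      then show ?thesis
        using mirrored_blocks_not_glued[of b2 j1 b1 "n * ms j1 - a1 - 1"] b1 b2 syllables(1)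
          \<open>j1 = j2\<close> \<open>n * ms j1 - a1 - 1 < n * ms j1\<close> False by simp
    qed
  qed
qed

lemma short_in_block_perimeter:
  assumes "block_start b s j" "q \<le> 2 * ms j"
  shows "real q \<le> 2 / real n * real (perimeter b)"
proof -
  have "n * q \<le> n * (2 * ms j)" using assms(2) by (rule mult_le_mono2)
  then have "n * q \<le> 2 * perimeter b" using perimeter_block_start[OF assms(1)] by linarith
  then have "real n * real q \<le> 2 * real (perimeter b)" by (simp flip: of_nat_mult)
  then show ?thesis using n by (simp add: field_simps)
qed

lemma double_selected_short:
  assumes e: "e \<in> FD"
    and p: "p \<in> special_sel n nx lab FD" "inv_path rv p \<in> special_sel n nx lab FD"
    and contour: "p \<in> contour_subpaths nx e \<or> inv_path rv p \<in> contour_subpaths nx e"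
  shows "real (length p) \<le> 2 / real n * real (perimeter e)"
proof -
  obtain b1 s1 j1 a1 q where b1: "block_start b1 s1 j1" "0 < q" "a1 + q \<le> n * ms j1"
    and p1: "p = cyc_path nx ((nx ^^ a1) b1) q"
    using special_sel_block[OF p(1)] .
  obtain b2 s2 j2 a2 q' where b2: "block_start b2 s2 j2" "0 < q'" "a2 + q' \<le> n * ms j2"
    and p2: "inv_path rv p = cyc_path nx ((nx ^^ a2) b2) q'"
    using special_sel_block[OF p(2)] .
  have "q' = q" using arg_cong[OF p2, of length] p1 by simp
  have short: "q \<le> 2 * ms j1" "q \<le> 2 * ms j2"
    using overlapping_blocks_short[OF b1(1) b2(1) p1 p2[unfolded \<open>q' = q\<close>] b1(2,3)] b2(3) \<open>q' = q\<close>
    by simp_all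
  have eD: "e \<in> D" using e FD_D by blast
  from contour consider "orbit nx e = orbit nx b1" | "orbit nx e = orbit nx b2"
    using orbit_of_contour_subpath[OF _ eD block_start_D[OF b1(1)] b1(2) p1]
      orbit_of_contour_subpath[OF _ eD block_start_D[OF b2(1)] b2(2) p2] by blast
  then show ?thesis
    using short_in_block_perimeter[OF b1(1) short(1)] short_in_block_perimeter[OF b2(1) short(2)] p1
    by cases simp_all
qed

lemma special_selI:
  assumes "e \<in> FD" "l \<le> perimeter e" "real n / (2 * real n - 2) * real (perimeter e) < real l"
    "map lab (cyc_path nx e l) = block_word n m \<or> map lab (cyc_path nx e l) = inv_word (block_word n m)"
    "0 < q" "a + q \<le> l"
  shows "cyc_path nx ((nx ^^ a) e) q \<in> special_sel n nx lab FD"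
  using assms unfolding special_sel_def by blast

lemma block_selected:
  assumes "block_start b s j"
  shows "cyc_path nx b (n * ms j) \<in> special_sel n nx lab FD"
proof -
  have "b \<in> FD" using assms unfolding block_start_def by blast
  moreover have "n * ms j \<le> perimeter b" using perimeter_block_start[OF assms] by simp
  moreover have "map lab (cyc_path nx b (n * ms j)) = block_word n (ms j) \<or>
        map lab (cyc_path nx b (n * ms j)) = inv_word (block_word n (ms j))"
    using block_start_labels[OF assms] block_word_or_inv_eq_map[of n s "ms j"] by (cases s) auto
  moreover have "0 < n * ms j" using block_start_sizes(1,2)[OF assms] n by simp
  ultimately show ?thesis using special_selI[of b _ _ _ 0] block_long(1)[OF assms] by simp
qed

lemma cond_B_special_sel: "cond_B l1 (2 / real n) D rv nx FD (special_sel n nx lab FD)"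
  unfolding cond_B_def
proof (intro ballI conjI allI impI)
  fix e assume e: "e \<in> FD"
  let ?S = "special_sel n nx lab FD"
  obtain b s j where b: "block_start b s j" "b \<in> orbit nx e" using block_start_exists[OF e] .
  have same: "orbit nx b = orbit nx e" using orbit_eq_if_mem b(2) e FD_D by blast
  define B where "B = cyc_path nx b (n * ms j)"
  have "0 < n * ms j" using block_start_sizes(1,2)[OF b(1)] n by simp
  moreover have "n * ms j \<le> perimeter e" using perimeter_block_start[OF b(1)] same by simp
  ultimately have B: "B \<in> ?S" "B \<in> contour_subpaths nx e"
    using block_selected[OF b(1)] b(2) unfolding B_def contour_subpaths_def by blast+
  then show "\<exists>p. p \<in> ?S \<and> p \<in> contour_subpaths nx e" by blast
  show "\<exists>p. p \<in> ?S \<and> p \<in> contour_subpaths nx e \<and> (1 - l1) * real (perimeter e) \<le> real (length p)"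
    using B block_long(2)[OF b(1)] same unfolding B_def by auto
  have maximal_is_block: "p = B"
    if "p \<in> ?S" "p \<in> contour_subpaths nx e"
      "\<not> (\<exists>p'. p' \<in> ?S \<and> p' \<in> contour_subpaths nx e \<and> p' \<noteq> p \<and> is_subpath p p')" for p
  proof (rule ccontr)
    assume "p \<noteq> B"
    moreover have "is_subpath p B"
      using special_sel_subpath_of_block[OF b(1) e b(2) that(1,2)] unfolding B_def .
    ultimately show False using that(3) B by blast
  qed
  show "p = q"
    if "(p \<in> ?S \<and> p \<in> contour_subpaths nx e \<and>
          \<not> (\<exists>p'. p' \<in> ?S \<and> p' \<in> contour_subpaths nx e \<and> p' \<noteq> p \<and> is_subpath p p')) \<and>
        (q \<in> ?S \<and> q \<in> contour_subpaths nx e \<and>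
          \<not> (\<exists>q'. q' \<in> ?S \<and> q' \<in> contour_subpaths nx e \<and> q' \<noteq> q \<and> is_subpath q q'))" for p q
    using maximal_is_block[of p] maximal_is_block[of q] that by (elim conjE) simp
  show "real (length p) \<le> 2 / real n * real (perimeter e)"
    if "oriented_arc D rv nx p \<and> p \<in> ?S \<and> inv_path rv p \<in> ?S \<and>
        (p \<in> contour_subpaths nx e \<or> inv_path rv p \<in> contour_subpaths nx e)" for p
    using double_selected_short[OF e] that by (elim conjE) simp
qed

end

section \<open>The standing construction\<close>

lemma candidate_nonempty: "candidate n R w \<Longrightarrow> w \<noteq> []"
proof
  assume "candidate n R w" "w = []"
  moreover have "regular_word n []"
    unfolding regular_word_def by (rule exI[of _ "\<lambda>_. 0"]) (simp add: gen_pow_def)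
  moreover have "grp_eq R [] []" unfolding grp_eq_def by simp
  ultimately show False unfolding candidate_def by blast
qed

context
  fixes n :: nat and l1 :: real and enum :: "nat \<Rightarrow> letter list" and Rs :: "nat \<Rightarrow> letter list set"
    and dfd :: "nat \<Rightarrow> bool" and ws :: "nat \<Rightarrow> letter list" and ms :: "nat \<Rightarrow> nat"
  assumes sc: "standing_construction n l1 enum Rs dfd ws ms"
begin

lemma standing_construction_defined_step:
  assumes "dfd j"
  shows "0 < j" "\<not> all_regular n (Rs (j - 1))"
  using sc assms unfolding standing_construction_def by (metis gr0I)+

lemma standing_construction_defined:
  assumes "dfd j"
  shows "candidate n (Rs (j - 1)) (ws j)"
    and "real (length (ws j)) \<le> l1 * real (n * ms j + length (ws j))"
    and "\<And>i. i < j \<Longrightarrow> dfd i \<Longrightarrow> ms j \<noteq> ms i"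
  using sc standing_construction_defined_step[OF assms] unfolding standing_construction_def by blast+

lemma standing_construction_relators: "Rs i \<subseteq> (\<lambda>j. relator n (ms j) (ws j)) ` {j. dfd j}"
proof (induction i)
  case 0
  then show ?case using sc unfolding standing_construction_def by simp
next
  case (Suc i)
  then show ?case using sc unfolding standing_construction_def
    by (cases "all_regular n (Rs i)") (auto dest!: spec[of _ "Suc i"])
qed

lemma standing_construction_inj_on_ms: "inj_on ms {j. dfd j}"
proof (rule inj_onI)
  fix i j assume "i \<in> {j. dfd j}" "j \<in> {j. dfd j}" "ms i = ms j"
  then show "i = j" using standing_construction_defined(3) by (metis linorder_neqE_nat mem_Collect_eq)
qed

end

theorem proposition5p1:
  fixes n :: nat and l1 :: real
    and enum :: "nat \<Rightarrow> letter list" and Rs :: "nat \<Rightarrow> letter list set"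
    and dfd :: "nat \<Rightarrow> bool" and ws :: "nat \<Rightarrow> letter list" and ms :: "nat \<Rightarrow> nat"
    and D :: "'d set" and rv nx :: "'d \<Rightarrow> 'd" and lab :: "'d \<Rightarrow> letter" and FD :: "'d set"
  assumes "63 \<le> n"
    and "0 < l1" and "l1 < 1"
    and "(4 + 2 * real n * l1 / (1 - l1)) * l1 \<le> 1 / real n"
    and "standing_construction n l1 enum Rs dfd ws ms"
    and "is_diagram n (\<Union>i. Rs i) D rv nx lab FD"
    and "weakly_reduced D rv nx lab FD"
  shows "cond_B l1 (2 / real n) D rv nx FD (special_sel n nx lab FD)"
proof -
  have "0 \<le> 2 * real n * l1 / (1 - l1) * l1" using assms(2,3) by simp
  then have "4 * l1 \<le> 1 / real n" using assms(4) by (simp add: algebra_simps)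
  then have l1_small: "4 * l1 * real n \<le> 1" using assms(1) by (simp add: field_simps)
  note candidate = standing_construction_defined(1)[OF assms(5)]
  interpret block_relator_diagram n l1 "{j. dfd j}" ms ws "\<Union>i. Rs i" D rv nx lab FD
  proof
    show "(\<Union>i. Rs i) \<subseteq> (\<lambda>j. relator n (ms j) (ws j)) ` {j. dfd j}"
      using standing_construction_relators[OF assms(5)] by blast
  qed (use assms l1_small standing_construction_inj_on_ms[OF assms(5)]
      standing_construction_defined(2)[OF assms(5)] candidate_nonempty[OF candidate] candidate
      in \<open>auto simp: candidate_def\<close>)
  show ?thesis by (rule cond_B_special_sel)
qed

end
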